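(* Let $A$ be a basic connected finite dimensional algebra over an algebraically closed field $k$ with ordinary quiver $Q$ without oriented cycles. Let $\nu\colon kQ\twoheadrightarrow A$ be a presentation, $D\colon kQ\xrightarrow{\sim}kQ$ a dilatation, and $\mu:=\nu\circ D$. Let $I=\mathsf{Ker}(\mu)$ and $J=\mathsf{Ker}(\nu)$, so that $J=D(I)$ and (since $\sim_I=\sim_J$) $\pi_1(Q,I)=\pi_1(Q,J)$. Then $\theta_\mu=\theta_\nu$.
   Context: Fix a complete set $e_1,\dots,e_n$ of primitive orthogonal idempotents of $A$ indexed by $Q_0=\{1,\dots,n\}$, $E=\bigoplus ke_i$. A presentation is a surjective algebra map $\nu\colon kQ\twoheadrightarrow A$ with admissible kernel ($(kQ^+)^N\subseteq\mathsf{Ker}\,\nu\subseteq(kQ^+)^2$ for some $N\ge2$, $kQ^+$ the arrow ideal) and $\nu(e_i)=e_i$. A dilatation is an automorphism $D$ of $kQ$ with $D(e_i)=e_i$ for all $i$ and $D(\alpha)\in k\alpha$ for every arrow $\alpha$; it is known that if $J=D(I)$ then the homotopy relations $\sim_I$ and $\sim_J$ coincide. $\mathsf{HH}^1(A)=Der_0(A)/Int_0(A)$, with $Der_0(A)$ the derivations vanishing on all $e_i$ and $Int_0(A)=\{a\mapsto ea-ae\mid e\in E\}$. Walks: paths with formal inverse arrows allowed. $\sim_I$ is the smallest equivalence relation on walks with $\alpha\alpha^{-1}\sim_I e_y$, $\alpha^{-1}\alpha\sim_I e_x$ for arrows $\alpha\colon x\to y$, compatible with concatenation, and identifying two paths occurring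 with nonzero coefficient in a same minimal relation of $I$ (a nonzero $\sum t_iu_i\in I$, $t_i\neq0$, distinct paths, no nonempty proper subsum in $I$). $\pi_1(Q,I)$ is the group of classes of closed walks at a fixed vertex $x_0$. Fix a maximal tree $T$ of $Q$, $\gamma_x$ the minimal walk in $T$ from $x_0$ to $x$. For a presentation $\nu$ with kernel $I$ and a group homomorphism $f\colon\pi_1(Q,I)\to k^+$, $\theta_\nu(f)$ is the class of the derivation $\tilde f$ with $\tilde f(\nu(u))=f([\gamma_y^{-1}u\gamma_x]_I)\nu(u)$ for paths $u$ from $x$ to $y$. *)

theory Defs
  imports "HOL-Computational_Algebra.Polynomial" "HOL-Algebra.Group"
begin

record ('v, 'a) quiver =
  verts :: "'v set"
  arrs  :: "'a set"
  src   :: "'a \<Rightarrow> 'v"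
  tgt   :: "'a \<Rightarrow> 'v"

text \<open>A path is a start vertex together with its list of arrows in traversal order;
  the trivial path e_x is (x, []).\<close>
type_synonym ('v, 'a) qpath = "'v \<times> 'a list"

definition is_path :: "('v, 'a) quiver \<Rightarrow> ('v, 'a) qpath \<Rightarrow> bool" where
  "is_path Q p \<longleftrightarrow> fst p \<in> verts Q \<and> set (snd p) \<subseteq> arrs Q \<and>
     (snd p \<noteq> [] \<longrightarrow> src Q (hd (snd p)) = fst p) \<and>
     (\<forall>i. Suc i < length (snd p) \<longrightarrow> tgt Q (snd p ! i) = src Q (snd p ! Suc i))"

definition path_end :: "('v, 'a) quiver \<Rightarrow> ('v, 'a) qpath \<Rightarrow> 'v" where
  "path_end Q p = (if snd p = [] then fst p else tgt Q (last (snd p)))"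

text \<open>A walk: start vertex and a list of steps (arrow, direction); True = the arrow,
  False = its formal inverse.\<close>
type_synonym ('v, 'a) walk = "'v \<times> ('a \<times> bool) list"

definition step_src :: "('v, 'a) quiver \<Rightarrow> 'a \<times> bool \<Rightarrow> 'v" where
  "step_src Q s = (if snd s then src Q (fst s) else tgt Q (fst s))"

definition step_tgt :: "('v, 'a) quiver \<Rightarrow> 'a \<times> bool \<Rightarrow> 'v" where
  "step_tgt Q s = (if snd s then tgt Q (fst s) else src Q (fst s))"

definition is_walk :: "('v, 'a) quiver \<Rightarrow> ('v, 'a) walk \<Rightarrow> bool" where
  "is_walk Q w \<longleftrightarrow> fst w \<in> verts Q \<and> fst ` set (snd w) \<subseteq> arrs Q \<and>
     (snd w \<noteq> [] \<longrightarrow> step_src Q (hd (snd w)) = fst w) \<and>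
     (\<forall>i. Suc i < length (snd w) \<longrightarrow> step_tgt Q (snd w ! i) = step_src Q (snd w ! Suc i))"

definition walk_end :: "('v, 'a) quiver \<Rightarrow> ('v, 'a) walk \<Rightarrow> 'v" where
  "walk_end Q w = (if snd w = [] then fst w else step_tgt Q (last (snd w)))"

definition wconcat :: "('v, 'a) walk \<Rightarrow> ('v, 'a) walk \<Rightarrow> ('v, 'a) walk" where
  "wconcat w v = (fst w, snd w @ snd v)"

definition winv :: "('v, 'a) quiver \<Rightarrow> ('v, 'a) walk \<Rightarrow> ('v, 'a) walk" where
  "winv Q w = (walk_end Q w, rev (map (\<lambda>(a, b). (a, \<not> b)) (snd w)))"

definition path_walk :: "('v, 'a) qpath \<Rightarrow> ('v, 'a) walk" where
  "path_walk p = (fst p, map (\<lambda>a. (a, True)) (snd p))"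

definition reduced_walk :: "('v, 'a) walk \<Rightarrow> bool" where
  "reduced_walk w \<longleftrightarrow> (\<forall>i. Suc i < length (snd w) \<longrightarrow>
      \<not> (fst (snd w ! i) = fst (snd w ! Suc i) \<and> snd (snd w ! i) \<noteq> snd (snd w ! Suc i)))"

definition finite_quiver :: "('v, 'a) quiver \<Rightarrow> bool" where
  "finite_quiver Q \<longleftrightarrow> finite (verts Q) \<and> finite (arrs Q) \<and>
     (\<forall>a\<in>arrs Q. src Q a \<in> verts Q \<and> tgt Q a \<in> verts Q)"

definition connected_quiver :: "('v, 'a) quiver \<Rightarrow> bool" where
  "connected_quiver Q \<longleftrightarrow> verts Q \<noteq> {} \<and>
     (\<forall>x\<in>verts Q. \<forall>y\<in>verts Q. \<exists>w. is_walk Q w \<and> fst w = x \<and> walk_end Q w = y)"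

definition no_oriented_cycles :: "('v, 'a) quiver \<Rightarrow> bool" where
  "no_oriented_cycles Q \<longleftrightarrow> (\<forall>p. is_path Q p \<and> snd p \<noteq> [] \<longrightarrow> path_end Q p \<noteq> fst p)"

definition spanning_tree :: "('v, 'a) quiver \<Rightarrow> 'a set \<Rightarrow> bool" where
  "spanning_tree Q T \<longleftrightarrow> T \<subseteq> arrs Q \<and>
     (\<forall>x\<in>verts Q. \<forall>y\<in>verts Q. \<exists>w. is_walk Q w \<and> fst ` set (snd w) \<subseteq> T \<and>
         fst w = x \<and> walk_end Q w = y) \<and>
     (\<forall>w. is_walk Q w \<and> fst ` set (snd w) \<subseteq> T \<and> reduced_walk w \<and> walk_end Q w = fst w
          \<longrightarrow> snd w = [])"

definition tree_walk :: "('v, 'a) quiver \<Rightarrow> 'a set \<Rightarrow> 'v \<Rightarrow> 'v \<Rightarrow> ('v, 'a) walk" where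
  "tree_walk Q T x0 x = (THE w. is_walk Q w \<and> fst ` set (snd w) \<subseteq> T \<and> reduced_walk w \<and>
      fst w = x0 \<and> walk_end Q w = x)"

definition pathalg :: "('v, 'a) quiver \<Rightarrow> (('v, 'a) qpath \<Rightarrow> 'k::field) set" where
  "pathalg Q = {c. (\<forall>p. c p \<noteq> 0 \<longrightarrow> is_path Q p) \<and> finite {p. c p \<noteq> 0}}"

definition delta :: "('v, 'a) qpath \<Rightarrow> ('v, 'a) qpath \<Rightarrow> 'k::field" where
  "delta p = (\<lambda>q. if q = p then 1 else 0)"

definition padd :: "(('v, 'a) qpath \<Rightarrow> 'k::field) \<Rightarrow> (('v, 'a) qpath \<Rightarrow> 'k) \<Rightarrow> ('v, 'a) qpath \<Rightarrow> 'k" where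
  "padd c d = (\<lambda>p. c p + d p)"

definition pscale :: "'k::field \<Rightarrow> (('v, 'a) qpath \<Rightarrow> 'k) \<Rightarrow> ('v, 'a) qpath \<Rightarrow> 'k" where
  "pscale a c = (\<lambda>p. a * c p)"

text \<open>Product (composition convention): for paths, u*v is "first v, then u".\<close>
definition pmult :: "('v, 'a) quiver \<Rightarrow> (('v, 'a) qpath \<Rightarrow> 'k::field) \<Rightarrow> (('v, 'a) qpath \<Rightarrow> 'k)
    \<Rightarrow> ('v, 'a) qpath \<Rightarrow> 'k" where
  "pmult Q c d = (\<lambda>r. if is_path Q r then
      (\<Sum>i\<le>length (snd r). c (path_end Q (fst r, take i (snd r)), drop i (snd r)) * d (fst r, take i (snd r)))
     else 0)"

definition pone :: "('v, 'a) quiver \<Rightarrow> ('v, 'a) qpath \<Rightarrow> 'k::field" where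
  "pone Q = (\<lambda>p. if is_path Q p \<and> snd p = [] then 1 else 0)"

definition arrow_ideal_pow :: "('v, 'a) quiver \<Rightarrow> nat \<Rightarrow> (('v, 'a) qpath \<Rightarrow> 'k::field) set" where
  "arrow_ideal_pow Q m = {c \<in> pathalg Q. \<forall>p. length (snd p) < m \<longrightarrow> c p = 0}"

definition admissible :: "('v, 'a) quiver \<Rightarrow> (('v, 'a) qpath \<Rightarrow> 'k::field) set \<Rightarrow> bool" where
  "admissible Q I \<longleftrightarrow> (\<exists>N\<ge>2. arrow_ideal_pow Q N \<subseteq> I \<and> I \<subseteq> arrow_ideal_pow Q 2)"

definition k_algebra :: "('k::field \<Rightarrow> 'b::ring_1 \<Rightarrow> 'b) \<Rightarrow> bool" where
  "k_algebra sc \<longleftrightarrow> (\<forall>a x y. sc a (x + y) = sc a x + sc a y) \<and>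
     (\<forall>a b x. sc (a + b) x = sc a x + sc b x) \<and>
     (\<forall>a b x. sc (a * b) x = sc a (sc b x)) \<and> (\<forall>x. sc 1 x = x) \<and>
     (\<forall>a x y. sc a (x * y) = sc a x * y \<and> sc a (x * y) = x * sc a y)"

definition kQ_alg_hom :: "('v, 'a) quiver \<Rightarrow> ('k::field \<Rightarrow> 'b::ring_1 \<Rightarrow> 'b)
    \<Rightarrow> ((('v, 'a) qpath \<Rightarrow> 'k) \<Rightarrow> 'b) \<Rightarrow> bool" where
  "kQ_alg_hom Q sc \<phi> \<longleftrightarrow>
     (\<forall>c\<in>pathalg Q. \<forall>d\<in>pathalg Q. \<phi> (padd c d) = \<phi> c + \<phi> d \<and> \<phi> (pmult Q c d) = \<phi> c * \<phi> d) \<and>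
     (\<forall>a. \<forall>c\<in>pathalg Q. \<phi> (pscale a c) = sc a (\<phi> c)) \<and> \<phi> (pone Q) = 1"

definition ker_on :: "('v, 'a) quiver \<Rightarrow> ((('v, 'a) qpath \<Rightarrow> 'k::field) \<Rightarrow> 'b::zero)
    \<Rightarrow> (('v, 'a) qpath \<Rightarrow> 'k) set" where
  "ker_on Q \<phi> = {c \<in> pathalg Q. \<phi> c = 0}"

definition presentation :: "('v, 'a) quiver \<Rightarrow> ('k::field \<Rightarrow> 'b::ring_1 \<Rightarrow> 'b) \<Rightarrow> ('v \<Rightarrow> 'b)
    \<Rightarrow> ((('v, 'a) qpath \<Rightarrow> 'k) \<Rightarrow> 'b) \<Rightarrow> bool" where
  "presentation Q sc e \<nu> \<longleftrightarrow> kQ_alg_hom Q sc \<nu> \<and> \<nu> ` pathalg Q = UNIV \<and>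
     admissible Q (ker_on Q \<nu>) \<and> (\<forall>x\<in>verts Q. \<nu> (delta (x, [])) = e x)"

definition dilatation :: "('v, 'a) quiver \<Rightarrow> ((('v, 'a) qpath \<Rightarrow> 'k::field) \<Rightarrow> (('v, 'a) qpath \<Rightarrow> 'k)) \<Rightarrow> bool" where
  "dilatation Q D \<longleftrightarrow> bij_betw D (pathalg Q) (pathalg Q) \<and>
     (\<forall>c\<in>pathalg Q. \<forall>d\<in>pathalg Q. D (padd c d) = padd (D c) (D d) \<and> D (pmult Q c d) = pmult Q (D c) (D d)) \<and>
     (\<forall>a. \<forall>c\<in>pathalg Q. D (pscale a c) = pscale a (D c)) \<and> D (pone Q) = pone Q \<and>
     (\<forall>x\<in>verts Q. D (delta (x, [])) = delta (x, [])) \<and>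
     (\<forall>\<alpha>\<in>arrs Q. \<exists>a. D (delta (src Q \<alpha>, [\<alpha>])) = pscale a (delta (src Q \<alpha>, [\<alpha>])))"

definition minimal_relation :: "(('v, 'a) qpath \<Rightarrow> 'k::field) set \<Rightarrow> (('v, 'a) qpath \<Rightarrow> 'k) \<Rightarrow> bool" where
  "minimal_relation I \<rho> \<longleftrightarrow> \<rho> \<in> I \<and> (\<exists>p. \<rho> p \<noteq> 0) \<and>
     (\<forall>S. S \<subseteq> {p. \<rho> p \<noteq> 0} \<and> S \<noteq> {} \<and> S \<noteq> {p. \<rho> p \<noteq> 0} \<longrightarrow>
          (\<lambda>p. if p \<in> S then \<rho> p else 0) \<notin> I)"

inductive homot :: "('v, 'a) quiver \<Rightarrow> (('v, 'a) qpath \<Rightarrow> 'k::field) set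
    \<Rightarrow> ('v, 'a) walk \<Rightarrow> ('v, 'a) walk \<Rightarrow> bool" for Q I where
  refl: "is_walk Q w \<Longrightarrow> homot Q I w w"
| sym: "homot Q I w w' \<Longrightarrow> homot Q I w' w"
| trans: "homot Q I w w' \<Longrightarrow> homot Q I w' w'' \<Longrightarrow> homot Q I w w''"
| cancel1: "\<alpha> \<in> arrs Q \<Longrightarrow> homot Q I (src Q \<alpha>, [(\<alpha>, True), (\<alpha>, False)]) (src Q \<alpha>, [])"
| cancel2: "\<alpha> \<in> arrs Q \<Longrightarrow> homot Q I (tgt Q \<alpha>, [(\<alpha>, False), (\<alpha>, True)]) (tgt Q \<alpha>, [])"
| ctx: "homot Q I w w' \<Longrightarrow> is_walk Q u \<Longrightarrow> is_walk Q v \<Longrightarrow> walk_end Q u = fst w \<Longrightarrow>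
        walk_end Q w = fst v \<Longrightarrow> homot Q I (wconcat u (wconcat w v)) (wconcat u (wconcat w' v))"
| rel: "minimal_relation I \<rho> \<Longrightarrow> \<rho> u \<noteq> 0 \<Longrightarrow> \<rho> u' \<noteq> 0 \<Longrightarrow>
        homot Q I (path_walk u) (path_walk u')"

definition hclass :: "('v, 'a) quiver \<Rightarrow> (('v, 'a) qpath \<Rightarrow> 'k::field) set \<Rightarrow> ('v, 'a) walk
    \<Rightarrow> ('v, 'a) walk set" where
  "hclass Q I w = {w'. homot Q I w w'}"

definition pi1 :: "('v, 'a) quiver \<Rightarrow> (('v, 'a) qpath \<Rightarrow> 'k::field) set \<Rightarrow> 'v
    \<Rightarrow> ('v, 'a) walk set monoid" where
  "pi1 Q I x0 = \<lparr> carrier = hclass Q I ` {w. is_walk Q w \<and> fst w = x0 \<and> walk_end Q w = x0},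
      mult = (\<lambda>C D. {w. \<exists>c\<in>C. \<exists>d\<in>D. homot Q I (wconcat c d) w}),
      one = hclass Q I (x0, []) \<rparr>"

definition kplus :: "'k::field monoid" where
  "kplus = \<lparr> carrier = UNIV, mult = (+), one = 0 \<rparr>"

definition Der0 :: "('v, 'a) quiver \<Rightarrow> ('k::field \<Rightarrow> 'b::ring_1 \<Rightarrow> 'b) \<Rightarrow> ('v \<Rightarrow> 'b)
    \<Rightarrow> ('b \<Rightarrow> 'b) set" where
  "Der0 Q sc e = {d. (\<forall>x y. d (x + y) = d x + d y) \<and> (\<forall>a x. d (sc a x) = sc a (d x)) \<and>
      (\<forall>x y. d (x * y) = d x * y + x * d y) \<and> (\<forall>v\<in>verts Q. d (e v) = 0)}"

definition Int0 :: "('v, 'a) quiver \<Rightarrow> ('k::field \<Rightarrow> 'b::ring_1 \<Rightarrow> 'b) \<Rightarrow> ('v \<Rightarrow> 'b)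
    \<Rightarrow> ('b \<Rightarrow> 'b) set" where
  "Int0 Q sc e = {d. \<exists>c :: 'v \<Rightarrow> 'k. d = (\<lambda>a. (\<Sum>v\<in>verts Q. sc (c v) (e v)) * a
                                            - a * (\<Sum>v\<in>verts Q. sc (c v) (e v)))}"

definition HH1_class :: "('v, 'a) quiver \<Rightarrow> ('k::field \<Rightarrow> 'b::ring_1 \<Rightarrow> 'b) \<Rightarrow> ('v \<Rightarrow> 'b)
    \<Rightarrow> ('b \<Rightarrow> 'b) \<Rightarrow> ('b \<Rightarrow> 'b) set" where
  "HH1_class Q sc e d = {d' \<in> Der0 Q sc e. (\<lambda>a. d' a - d a) \<in> Int0 Q sc e}"

definition is_f_tilde :: "('v, 'a) quiver \<Rightarrow> ('k::field \<Rightarrow> 'b::ring_1 \<Rightarrow> 'b)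
    \<Rightarrow> ((('v, 'a) qpath \<Rightarrow> 'k) \<Rightarrow> 'b) \<Rightarrow> (('v, 'a) qpath \<Rightarrow> 'k) set \<Rightarrow> 'a set \<Rightarrow> 'v
    \<Rightarrow> (('v, 'a) walk set \<Rightarrow> 'k) \<Rightarrow> ('b \<Rightarrow> 'b) \<Rightarrow> bool" where
  "is_f_tilde Q sc \<nu> I T x0 f d \<longleftrightarrow>
     (\<forall>x y. d (x + y) = d x + d y) \<and> (\<forall>a x. d (sc a x) = sc a (d x)) \<and>
     (\<forall>u. is_path Q u \<longrightarrow>
        d (\<nu> (delta u)) =
          sc (f (hclass Q I (wconcat (tree_walk Q T x0 (fst u))
                  (wconcat (path_walk u) (winv Q (tree_walk Q T x0 (path_end Q u)))))))
             (\<nu> (delta u)))"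

definition theta :: "('v, 'a) quiver \<Rightarrow> ('k::field \<Rightarrow> 'b::ring_1 \<Rightarrow> 'b) \<Rightarrow> ('v \<Rightarrow> 'b)
    \<Rightarrow> ((('v, 'a) qpath \<Rightarrow> 'k) \<Rightarrow> 'b) \<Rightarrow> (('v, 'a) qpath \<Rightarrow> 'k) set \<Rightarrow> 'a set \<Rightarrow> 'v
    \<Rightarrow> (('v, 'a) walk set \<Rightarrow> 'k) \<Rightarrow> ('b \<Rightarrow> 'b) set" where
  "theta Q sc e \<nu> I T x0 f = HH1_class Q sc e (THE d. is_f_tilde Q sc \<nu> I T x0 f d)"

end

theory Submission
  imports Defs
begin

text \<open>A dilatation fixes the trivial paths and multiplies every arrow by a scalar, so by
  multiplicativity it multiplies every path u by a scalar m(u), nonzero because D is injective: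
  D is diagonal in the path basis. Hence a relation lies in I = Ker(\<nu> D) iff its rescaling lies
  in J = Ker \<nu>; rescaling preserves supports, so minimal relations of I and J correspond with the
  same paths in their supports, and the homotopy relations coincide. Finally
  \<nu>(D u) = m(u) \<nu>(u), and a k-linear map has \<nu>(u) as eigenvector with eigenvalue s iff it has
  m(u) \<nu>(u) as one; so the conditions defining the derivation f-tilde for \<mu> and for \<nu> coincide,
  and \<theta>_\<mu>(f) = \<theta>_\<nu>(f) for every f.\<close>

definition diag_scale :: "(('v, 'a) qpath \<Rightarrow> 'k::field) \<Rightarrow> (('v, 'a) qpath \<Rightarrow> 'k) \<Rightarrow> ('v, 'a) qpath \<Rightarrow> 'k" where
  "diag_scale m c = (\<lambda>p. m p * c p)"

lemma pathalg_zero: "(\<lambda>_. 0) \<in> pathalg Q"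
  unfolding pathalg_def by simp

lemma delta_in_pathalg: "is_path Q p \<Longrightarrow> delta p \<in> pathalg Q"
  unfolding pathalg_def delta_def by auto

lemma pathalg_support_subset:
  assumes "c \<in> pathalg Q" and "{p. d p \<noteq> 0} \<subseteq> {p. c p \<noteq> 0}"
  shows "d \<in> pathalg Q"
  using assms unfolding pathalg_def by (auto intro: finite_subset)

lemma pscale_in_pathalg: "c \<in> pathalg Q \<Longrightarrow> pscale a c \<in> pathalg Q"
  by (erule pathalg_support_subset) (auto simp: pscale_def)

lemma diag_scale_in_pathalg: "c \<in> pathalg Q \<Longrightarrow> diag_scale m c \<in> pathalg Q"
  by (erule pathalg_support_subset) (auto simp: diag_scale_def)

lemma diag_scale_delta: "diag_scale m (delta p) = pscale (m p) (delta p)"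
  unfolding diag_scale_def pscale_def delta_def by auto

lemma pmult_pscale: "pmult Q (pscale a c) (pscale b d) = pscale (a * b) (pmult Q c d)"
  unfolding pmult_def pscale_def by (auto simp: sum_distrib_left mult_ac)

lemma pathalg_induct [consumes 1, case_names zero add]:
  fixes P :: "(('v, 'a) qpath \<Rightarrow> 'k::field) \<Rightarrow> bool"
  assumes "c \<in> pathalg Q"
    and zero: "P (\<lambda>_. 0)"
    and add: "\<And>p a c. is_path Q p \<Longrightarrow> c \<in> pathalg Q \<Longrightarrow> P c \<Longrightarrow> P (padd (pscale a (delta p)) c)"
  shows "P c"
proof -
  have "\<forall>c \<in> pathalg Q. {p. c p \<noteq> 0} \<subseteq> S \<longrightarrow> P c" if "finite S" for S
    using that
  proof (induction S rule: finite_induct)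
    case empty
    have "c = (\<lambda>_. 0)" if "{p. c p \<noteq> 0} \<subseteq> {}" for c :: "_ \<Rightarrow> 'k"
      using that by auto
    then show ?case using zero by blast
  next
    case (insert p S)
    show ?case
    proof (intro ballI impI)
      fix c :: "_ \<Rightarrow> 'k" assume c: "c \<in> pathalg Q" and supp: "{p. c p \<noteq> 0} \<subseteq> insert p S"
      define c' where "c' = (\<lambda>q. if q = p then 0 else c q)"
      have "{q. c' q \<noteq> 0} \<subseteq> {q. c q \<noteq> 0}" "{q. c' q \<noteq> 0} \<subseteq> S"
        using supp by (auto simp: c'_def)
      then have c': "c' \<in> pathalg Q" "{q. c' q \<noteq> 0} \<subseteq> S"
        using pathalg_support_subset[OF c] by blast+
      show "P c"
      proof (cases "c p = 0")
        case True
        then have "c = c'" by (auto simp: c'_def)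
        then show ?thesis using insert.IH c' by blast
      next
        case False
        then have "is_path Q p" using c unfolding pathalg_def by blast
        moreover have "c = padd (pscale (c p) (delta p)) c'"
          by (auto simp: c'_def padd_def pscale_def delta_def)
        ultimately show ?thesis using add c' insert.IH by metis
      qed
    qed
  qed
  then show ?thesis using assms(1) by (auto simp: pathalg_def)
qed

lemma linear_map_eq_diag_scale:
  assumes additive: "\<And>c d. c \<in> pathalg Q \<Longrightarrow> d \<in> pathalg Q \<Longrightarrow> L (padd c d) = padd (L c) (L d)"
    and homogeneous: "\<And>a c. c \<in> pathalg Q \<Longrightarrow> L (pscale a c) = pscale a (L c)"
    and basis: "\<And>p. is_path Q p \<Longrightarrow> L (delta p) = pscale (m p) (delta p)"
    and c: "c \<in> pathalg Q"
  shows "L c = diag_scale m (c :: _ \<Rightarrow> 'k::field)"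
  using c
proof (induction rule: pathalg_induct)
  case zero
  have "L (pscale 0 (\<lambda>_. 0)) = pscale 0 (L (\<lambda>_. 0))"
    using homogeneous pathalg_zero by blast
  then show ?case by (simp add: pscale_def diag_scale_def)
next
  case (add p a c)
  have "L (padd (pscale a (delta p)) c) = padd (pscale a (L (delta p))) (L c)"
    using additive homogeneous add.hyps pscale_in_pathalg delta_in_pathalg by metis
  then show ?case using add basis
    by (auto simp: padd_def pscale_def diag_scale_def delta_def algebra_simps)
qed

lemma is_path_snocD:
  assumes "is_path Q (x, as @ [\<alpha>])"
  shows "is_path Q (x, as)" "\<alpha> \<in> arrs Q" "path_end Q (x, as) = src Q \<alpha>"
proof -
  show "is_path Q (x, as)" "\<alpha> \<in> arrs Q"
    using assms unfolding is_path_def by (auto simp: nth_append)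
  show "path_end Q (x, as) = src Q \<alpha>"
  proof (cases as rule: rev_cases)
    case Nil
    then show ?thesis using assms unfolding is_path_def path_end_def by auto
  next
    case (snoc bs \<beta>)
    then have "tgt Q ((as @ [\<alpha>]) ! length bs) = src Q ((as @ [\<alpha>]) ! Suc (length bs))"
      using assms unfolding is_path_def by auto
    then show ?thesis using snoc unfolding path_end_def by (simp add: nth_append)
  qed
qed

lemma take_drop_eq_snoc_iff:
  "take i ys = xs \<and> drop i ys = [y] \<longleftrightarrow> ys = xs @ [y] \<and> i = length xs"
proof
  assume "take i ys = xs \<and> drop i ys = [y]"
  moreover from this have "ys = xs @ [y]" by (metis append_take_drop_id)
  ultimately show "ys = xs @ [y] \<and> i = length xs"
    by (metis length_take length_append_singleton min_def n_not_Suc_n)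
qed simp

lemma pmult_delta_snoc:
  fixes Q :: "('v, 'a) quiver"
  assumes "is_path Q (x, as @ [\<alpha>])"
  shows "pmult Q (delta (src Q \<alpha>, [\<alpha>])) (delta (x, as)) = (delta (x, as @ [\<alpha>]) :: _ \<Rightarrow> 'k::field)"
proof
  fix r :: "('v, 'a) qpath"
  have "(delta (src Q \<alpha>, [\<alpha>]) (path_end Q (fst r, take i (snd r)), drop i (snd r)) *
      delta (x, as) (fst r, take i (snd r)) :: 'k) =
      (if fst r = x \<and> take i (snd r) = as \<and> drop i (snd r) = [\<alpha>] then 1 else 0)" for i
    using is_path_snocD(3)[OF assms] by (auto simp: delta_def)
  also have "\<dots> i = (if r = (x, as @ [\<alpha>]) then if i = length as then 1 else 0 else 0)" for i
    unfolding take_drop_eq_snoc_iff by (cases r) auto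
  finally have summand: "(delta (src Q \<alpha>, [\<alpha>]) (path_end Q (fst r, take i (snd r)), drop i (snd r)) *
      delta (x, as) (fst r, take i (snd r)) :: 'k) =
      (if r = (x, as @ [\<alpha>]) then if i = length as then 1 else 0 else 0)" for i .
  show "pmult Q (delta (src Q \<alpha>, [\<alpha>])) (delta (x, as)) r = (delta (x, as @ [\<alpha>]) r :: 'k)"
  proof (cases "is_path Q r")
    case True
    then have "pmult Q (delta (src Q \<alpha>, [\<alpha>])) (delta (x, as)) r =
        (\<Sum>i\<le>length (snd r). if r = (x, as @ [\<alpha>]) then if i = length as then 1 else 0 else 0 :: 'k)"
      by (simp add: pmult_def summand)
    then show ?thesis by (auto simp: delta_def)
  next
    case False
    then show ?thesis using assms by (auto simp: pmult_def delta_def)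
  qed
qed

lemma dilatation_zero:
  assumes "dilatation Q D"
  shows "D (\<lambda>_. 0) = (\<lambda>_. 0 :: 'k::field)"
proof -
  have "D (pscale 0 (\<lambda>_. 0)) = pscale 0 (D (\<lambda>_. 0 :: 'k))"
    using assms pathalg_zero unfolding dilatation_def by blast
  then show ?thesis by (simp add: pscale_def)
qed

lemma dilatation_scales_path:
  assumes dil: "dilatation Q D" and src_verts: "\<And>\<alpha>. \<alpha> \<in> arrs Q \<Longrightarrow> src Q \<alpha> \<in> verts Q"
    and "is_path Q (x, as)"
  shows "\<exists>a. a \<noteq> 0 \<and> D (delta (x, as)) = pscale a (delta (x, as) :: _ \<Rightarrow> 'k::field)"
  using \<open>is_path Q (x, as)\<close>
proof (induction as rule: rev_induct)
  case Nil
  then have "x \<in> verts Q" unfolding is_path_def by auto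
  then show ?case using dil unfolding dilatation_def by (intro exI[of _ 1]) (auto simp: pscale_def)
next
  case (snoc \<alpha> as)
  note prefix = is_path_snocD[OF snoc.prems]
  obtain a where a: "a \<noteq> 0" "D (delta (x, as)) = pscale a (delta (x, as) :: _ \<Rightarrow> 'k)"
    using snoc.IH[OF prefix(1)] by blast
  have arrow: "is_path Q (src Q \<alpha>, [\<alpha>])"
    using src_verts prefix(2) unfolding is_path_def by auto
  obtain b where b: "D (delta (src Q \<alpha>, [\<alpha>])) = pscale b (delta (src Q \<alpha>, [\<alpha>]) :: _ \<Rightarrow> 'k)"
    using dil prefix(2) unfolding dilatation_def by blast
  have "b \<noteq> 0"
  proof
    assume "b = 0"
    then have "D (delta (src Q \<alpha>, [\<alpha>])) = D (\<lambda>_. 0 :: 'k)"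
      using b dilatation_zero[OF dil] by (simp add: pscale_def)
    then have "delta (src Q \<alpha>, [\<alpha>]) = (\<lambda>_. 0 :: 'k)"
      using dil delta_in_pathalg[OF arrow] pathalg_zero
      unfolding dilatation_def bij_betw_def inj_on_def by blast
    then show False by (metis delta_def one_neq_zero)
  qed
  have "D (delta (x, as @ [\<alpha>])) = D (pmult Q (delta (src Q \<alpha>, [\<alpha>])) (delta (x, as)))"
    unfolding pmult_delta_snoc[OF snoc.prems] ..
  also have "\<dots> = pmult Q (D (delta (src Q \<alpha>, [\<alpha>]))) (D (delta (x, as)))"
    using dil delta_in_pathalg[OF arrow] delta_in_pathalg[OF prefix(1)]
    unfolding dilatation_def by blast
  also have "\<dots> = pscale (b * a) (delta (x, as @ [\<alpha>]))"
    unfolding a b pmult_pscale pmult_delta_snoc[OF snoc.prems] ..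
  finally show ?case using a(1) \<open>b \<noteq> 0\<close> by (intro exI[of _ "b * a"]) simp
qed

lemma dilatation_eq_diag_scale:
  fixes D :: "(('v, 'a) qpath \<Rightarrow> 'k::field) \<Rightarrow> _"
  assumes dil: "dilatation Q D" and src_verts: "\<And>\<alpha>. \<alpha> \<in> arrs Q \<Longrightarrow> src Q \<alpha> \<in> verts Q"
  obtains m where "\<And>p. m p \<noteq> 0" and "\<And>c. c \<in> pathalg Q \<Longrightarrow> D c = diag_scale m c"
proof -
  have "\<forall>p. \<exists>a. a \<noteq> 0 \<and> (is_path Q p \<longrightarrow> D (delta p) = pscale a (delta p))"
  proof
    fix p :: "('v, 'a) qpath"
    show "\<exists>a. a \<noteq> 0 \<and> (is_path Q p \<longrightarrow> D (delta p) = pscale a (delta p))"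
      using dilatation_scales_path[OF dil src_verts, of "fst p" "snd p"]
      by (cases "is_path Q p") (auto intro: exI[of _ 1])
  qed
  then obtain m where m: "\<And>p. m p \<noteq> 0"
    and basis: "\<And>p. is_path Q p \<Longrightarrow> D (delta p) = pscale (m p) (delta p)"
    by metis
  have "D c = diag_scale m c" if "c \<in> pathalg Q" for c
    using linear_map_eq_diag_scale[OF _ _ basis that] dil unfolding dilatation_def by blast
  with m show thesis by (rule that)
qed

lemma minimal_relation_diag_scale:
  assumes m: "\<And>p. m p \<noteq> (0::'k::field)" and I: "I \<subseteq> pathalg Q"
    and IJ: "\<And>c. c \<in> pathalg Q \<Longrightarrow> c \<in> I \<longleftrightarrow> diag_scale m c \<in> J"
    and "minimal_relation I \<rho>"
  shows "minimal_relation J (diag_scale m \<rho>)"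
proof -
  let ?restr = "\<lambda>S (c :: _ \<Rightarrow> 'k) p. if p \<in> S then c p else 0"
  have \<rho>: "\<rho> \<in> I" "\<rho> \<in> pathalg Q" "\<exists>p. \<rho> p \<noteq> 0"
    and minimal: "\<And>S. S \<subseteq> {p. \<rho> p \<noteq> 0} \<Longrightarrow> S \<noteq> {} \<Longrightarrow> S \<noteq> {p. \<rho> p \<noteq> 0} \<Longrightarrow> ?restr S \<rho> \<notin> I"
    using I \<open>minimal_relation I \<rho>\<close> unfolding minimal_relation_def by auto
  have supp: "{p. diag_scale m \<rho> p \<noteq> 0} = {p. \<rho> p \<noteq> 0}"
    using m by (auto simp: diag_scale_def)
  have "?restr S (diag_scale m \<rho>) \<notin> J"
    if "S \<subseteq> {p. \<rho> p \<noteq> 0}" "S \<noteq> {}" "S \<noteq> {p. \<rho> p \<noteq> 0}" for S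
  proof -
    have "?restr S \<rho> \<in> pathalg Q"
      using \<rho>(2) by (rule pathalg_support_subset) auto
    then have "diag_scale m (?restr S \<rho>) \<notin> J"
      using IJ minimal[OF that] by blast
    moreover have "diag_scale m (?restr S \<rho>) = ?restr S (diag_scale m \<rho>)"
      by (auto simp: diag_scale_def)
    ultimately show ?thesis by simp
  qed
  moreover have "diag_scale m \<rho> \<in> J" using IJ \<rho>(1,2) by blast
  moreover have "\<exists>p. diag_scale m \<rho> p \<noteq> 0" using \<rho>(3) supp by blast
  ultimately show ?thesis
    unfolding minimal_relation_def supp by blast
qed

lemma homot_diag_scale_mono:
  assumes m: "\<And>p. m p \<noteq> (0::'k::field)" and I: "I \<subseteq> pathalg Q"
    and IJ: "\<And>c. c \<in> pathalg Q \<Longrightarrow> c \<in> I \<longleftrightarrow> diag_scale m c \<in> J"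
    and "homot Q I w w'"
  shows "homot Q J w w'"
  using \<open>homot Q I w w'\<close>
proof (induction rule: homot.induct)
  case (rel \<rho> u u')
  have "minimal_relation J (diag_scale m \<rho>)"
    using minimal_relation_diag_scale[OF m I IJ rel.hyps(1)] .
  moreover have "diag_scale m \<rho> u \<noteq> 0" "diag_scale m \<rho> u' \<noteq> 0"
    using rel.hyps(2,3) m by (simp_all add: diag_scale_def)
  ultimately show ?case by (rule homot.rel)
next
  case (sym w w')
  show ?case by (rule homot.sym[OF sym.IH])
next
  case (trans w w' w'')
  show ?case by (rule homot.trans[OF trans.IH])
qed (simp_all add: homot.refl homot.cancel1 homot.cancel2 homot.ctx)

lemma homot_diag_scale_eq:
  assumes m: "\<And>p. m p \<noteq> (0::'k::field)" and I: "I \<subseteq> pathalg Q" and J: "J \<subseteq> pathalg Q"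
    and IJ: "\<And>c. c \<in> pathalg Q \<Longrightarrow> c \<in> I \<longleftrightarrow> diag_scale m c \<in> J"
  shows "homot Q I = homot Q J"
proof -
  let ?m' = "\<lambda>p. inverse (m p)"
  have JI: "c \<in> J \<longleftrightarrow> diag_scale ?m' c \<in> I" if "c \<in> pathalg Q" for c
  proof -
    have "diag_scale m (diag_scale ?m' c) = c"
      using m by (auto simp: diag_scale_def)
    then show ?thesis using IJ[OF diag_scale_in_pathalg[OF that]] by simp
  qed
  have "homot Q I w w' \<Longrightarrow> homot Q J w w'" for w w'
    using homot_diag_scale_mono[OF m I IJ] .
  moreover have "homot Q J w w' \<Longrightarrow> homot Q I w w'" for w w'
    using homot_diag_scale_mono[of ?m' J Q I] m J JI by simp
  ultimately show ?thesis by (intro ext iffI)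
qed

lemma homot_ker_comp_dilatation:
  assumes "dilatation Q D" and "\<And>\<alpha>. \<alpha> \<in> arrs Q \<Longrightarrow> src Q \<alpha> \<in> verts Q"
  shows "homot Q (ker_on Q (\<nu> \<circ> D)) = homot Q (ker_on Q \<nu>)"
proof -
  obtain m where m: "\<And>p. m p \<noteq> 0" and D: "\<And>c. c \<in> pathalg Q \<Longrightarrow> D c = diag_scale m c"
    using dilatation_eq_diag_scale[OF assms] by blast
  show ?thesis
  proof (rule homot_diag_scale_eq[OF m])
    show "c \<in> ker_on Q (\<nu> \<circ> D) \<longleftrightarrow> diag_scale m c \<in> ker_on Q \<nu>" if "c \<in> pathalg Q" for c
      using that D diag_scale_in_pathalg unfolding ker_on_def by auto
  qed (auto simp: ker_on_def)
qed

lemma eigenvector_sc_iff: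
  assumes ka: "k_algebra sc" and d: "\<And>a x. d (sc a x) = sc a (d x)" and "a \<noteq> 0"
  shows "d (sc a x) = sc s (sc a x) \<longleftrightarrow> d x = sc (s::'k::field) (x::'b::ring_1)"
proof -
  have mult: "sc (a * b) y = sc a (sc b y)" and one: "sc 1 y = y" for a b and y :: 'b
    using ka unfolding k_algebra_def by auto
  have cancel: "sc (inverse a) (sc a y) = y" for y
    using mult[of "inverse a" a y] one \<open>a \<noteq> 0\<close> by simp
  have "sc s (sc a x) = sc a (sc s x)"
    using mult[of s a x] mult[of a s x] by (simp add: mult.commute)
  then have "d (sc a x) = sc s (sc a x) \<longleftrightarrow> sc a (d x) = sc a (sc s x)"
    using d by simp
  also have "\<dots> \<longleftrightarrow> d x = sc s x"
    using cancel by metis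
  finally show ?thesis .
qed

lemma is_f_tilde_rescale:
  assumes "k_algebra sc"
    and m: "\<And>u. is_path Q u \<Longrightarrow> m u \<noteq> 0"
    and \<mu>: "\<And>u. is_path Q u \<Longrightarrow> \<mu> (delta u) = sc (m u) (\<nu> (delta u))"
    and "hclass Q I = hclass Q J"
  shows "is_f_tilde Q sc \<mu> I T x0 f = is_f_tilde Q sc \<nu> J T x0 f"
proof
  fix d
  show "is_f_tilde Q sc \<mu> I T x0 f d \<longleftrightarrow> is_f_tilde Q sc \<nu> J T x0 f d"
  proof (cases "\<forall>a x. d (sc a x) = sc a (d x)")
    case True
    have "d (\<mu> (delta u)) = sc s (\<mu> (delta u)) \<longleftrightarrow> d (\<nu> (delta u)) = sc s (\<nu> (delta u))"
      if "is_path Q u" for u s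
      unfolding \<mu>[OF that] using eigenvector_sc_iff[OF assms(1) _ m[OF that]] True by blast
    then show ?thesis using \<open>hclass Q I = hclass Q J\<close> unfolding is_f_tilde_def by auto
  qed (auto simp: is_f_tilde_def)
qed

theorem proposition3p1:
  fixes Q :: "('v, 'a) quiver"
    and sc :: "'k::alg_closed_field \<Rightarrow> 'b::ring_1 \<Rightarrow> 'b"
    and e :: "'v \<Rightarrow> 'b"
    and \<nu> :: "(('v, 'a) qpath \<Rightarrow> 'k) \<Rightarrow> 'b"
    and D :: "(('v, 'a) qpath \<Rightarrow> 'k) \<Rightarrow> (('v, 'a) qpath \<Rightarrow> 'k)"
    and T :: "'a set" and x0 :: 'v
  assumes "finite_quiver Q" and "connected_quiver Q" and "no_oriented_cycles Q"
    and "k_algebra sc"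
    and "presentation Q sc e \<nu>"
    and "dilatation Q D"
    and "spanning_tree Q T" and "x0 \<in> verts Q"
  shows "\<forall>f \<in> hom (pi1 Q (ker_on Q (\<nu> \<circ> D)) x0) kplus.
           theta Q sc e (\<nu> \<circ> D) (ker_on Q (\<nu> \<circ> D)) T x0 f = theta Q sc e \<nu> (ker_on Q \<nu>) T x0 f"
proof
  fix f
  have src_verts: "\<And>\<alpha>. \<alpha> \<in> arrs Q \<Longrightarrow> src Q \<alpha> \<in> verts Q"
    using \<open>finite_quiver Q\<close> unfolding finite_quiver_def by blast
  obtain m where m: "\<And>p. m p \<noteq> 0" and D: "\<And>c. c \<in> pathalg Q \<Longrightarrow> D c = diag_scale m c"
    using dilatation_eq_diag_scale[OF \<open>dilatation Q D\<close> src_verts] by blast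
  have \<nu>_pscale: "\<nu> (pscale a c) = sc a (\<nu> c)" if "c \<in> pathalg Q" for a c
    using \<open>presentation Q sc e \<nu>\<close> that unfolding presentation_def kQ_alg_hom_def by blast
  have "(\<nu> \<circ> D) (delta u) = sc (m u) (\<nu> (delta u))" if "is_path Q u" for u
    using D[OF delta_in_pathalg[OF that]] \<nu>_pscale[OF delta_in_pathalg[OF that]]
    by (simp add: diag_scale_delta)
  moreover have "hclass Q (ker_on Q (\<nu> \<circ> D)) = hclass Q (ker_on Q \<nu>)"
    using homot_ker_comp_dilatation[OF \<open>dilatation Q D\<close> src_verts, of \<nu>]
    unfolding hclass_def by simp
  ultimately have "is_f_tilde Q sc (\<nu> \<circ> D) (ker_on Q (\<nu> \<circ> D)) T x0 f
      = is_f_tilde Q sc \<nu> (ker_on Q \<nu>) T x0 f"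
    by (rule is_f_tilde_rescale[OF \<open>k_algebra sc\<close> m])
  then show "theta Q sc e (\<nu> \<circ> D) (ker_on Q (\<nu> \<circ> D)) T x0 f = theta Q sc e \<nu> (ker_on Q \<nu>) T x0 f"
    unfolding theta_def by simp
qed

end
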